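(* Consider a finite discounted MDP with rewards in $[0,1]$ and an initial state distribution $\mu$ with $\min_s\mu(s)>0$, and run the on-policy stochastic natural policy gradient algorithm described in the context with constant learning rate $\eta>0$. Then for all $t\ge1$: $V^{\pi_{\theta_{t+1}}}(s_0) - V^{\pi_{\theta_t}}(s_0)\ge 0$ almost surely for every $s_0\in\mathcal{S}$, and $$\mathbb{E}_t\left[V^{\pi_{\theta_{t+1}}}(\mu)\right] - V^{\pi_{\theta_t}}(\mu) \ge \frac{\eta(1-\gamma)^4\min_s\mu(s)}{1+\eta}\cdot\left\|\frac{d_\mu^{\pi^*}}{\mu}\right\|_\infty^{-1}\cdot\frac{\min_s\pi_{\theta_t}(a^*(s)\mid s)^2}{S}\cdot\left(V^{\pi^*}(\mu) - V^{\pi_{\theta_t}}(\mu)\right)^2,$$ where $\mathbb{E}_t$ is over the sampling $s_t\sim d_\mu^{\pi_{\theta_t}}(\cdot)$ and $a_t\sim\pi_{\theta_t}(\cdot\mid s_t)$ given $\theta_t$.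
   Context: A finite MDP is $(\mathcal{S},\mathcal{A},r,\mathcal{P},\gamma)$ with finite state and action sets, $S:=|\mathcal{S}|$, $r:\mathcal{S}\times\mathcal{A}\to[0,1]$, transition kernel $\mathcal{P}$, $\gamma\in[0,1)$. Softmax policy $\pi_\theta(a\mid s) = e^{\theta(s,a)}/\sum_{a'}e^{\theta(s,a')}$. $V^\pi(s) = \mathbb{E}[\sum_{t\ge0}\gamma^t r(s_t,a_t)\mid s_0=s]$, $Q^\pi(s,a) = r(s,a)+\gamma\sum_{s'}\mathcal{P}(s'\mid s,a)V^\pi(s')$, $V^\pi(\mu) = \mathbb{E}_{s\sim\mu}V^\pi(s)$, $d_\mu^\pi(s) = \mathbb{E}_{s_0\sim\mu}[(1-\gamma)\sum_{t\ge0}\gamma^t\Pr(s_t=s\mid s_0,\pi,\mathcal{P})]$. $\pi^*$ is an optimal deterministic policy with action $a^*(s)$ in state $s$. $\left\|\frac{d_\mu^{\pi^*}}{\mu}\right\|_\infty := \max_s d_\mu^{\pi^*}(s)/\mu(s)$. Algorithm: at iteration $t$, sample $s_t\sim d_\mu^{\pi_{\theta_t}}(\cdot)$, $a_t\sim\pi_{\theta_t}(\cdot\mid s_t)$, set $\theta_{t+1}(s_t,a_t) = \theta_t(s_t,a_t)+\eta\frac{Q^{\pi_{\theta_t}}(s_t,a_t)-V^{\pi_{\theta_t}}(s_t)}{\pi_{\theta_t}(a_t\mid s_t)}$, other coordinates unchanged. *)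

theory Defs
  imports "HOL-Analysis.Analysis"
begin

text \<open>Finite MDP: states 's, actions 'a (finite types); transition kernel
  P s a s' = Pr(s' | s, a); reward r s a; discount g.  A (stochastic) policy is
  pol s a = pi(a | s).\<close>

definition is_policy :: "('s::finite \<Rightarrow> 'a::finite \<Rightarrow> real) \<Rightarrow> bool" where
  "is_policy pol \<longleftrightarrow> (\<forall>s a. 0 \<le> pol s a) \<and> (\<forall>s. (\<Sum>a\<in>UNIV. pol s a) = 1)"

definition det_policy :: "('s \<Rightarrow> 'a) \<Rightarrow> 's \<Rightarrow> 'a \<Rightarrow> real" where
  "det_policy astar s b = (if b = astar s then 1 else 0)"

definition softmax :: "('s \<Rightarrow> 'a::finite \<Rightarrow> real) \<Rightarrow> 's \<Rightarrow> 'a \<Rightarrow> real" where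
  "softmax \<theta> s a = exp (\<theta> s a) / (\<Sum>a'\<in>UNIV. exp (\<theta> s a'))"

definition ppol :: "('s::finite \<Rightarrow> 'a::finite \<Rightarrow> 's \<Rightarrow> real) \<Rightarrow> ('s \<Rightarrow> 'a \<Rightarrow> real) \<Rightarrow> 's \<Rightarrow> 's \<Rightarrow> real" where
  "ppol P pol s s' = (\<Sum>a\<in>UNIV. pol s a * P s a s')"

text \<open>Pn P pol n s s' = Pr(s_n = s' | s_0 = s, pol, P).\<close>
fun Pn :: "('s::finite \<Rightarrow> 'a::finite \<Rightarrow> 's \<Rightarrow> real) \<Rightarrow> ('s \<Rightarrow> 'a \<Rightarrow> real) \<Rightarrow> nat \<Rightarrow> 's \<Rightarrow> 's \<Rightarrow> real" where
  "Pn P pol 0 s s' = (if s = s' then 1 else 0)"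
| "Pn P pol (Suc n) s s' = (\<Sum>u\<in>UNIV. Pn P pol n s u * ppol P pol u s')"

definition rpol :: "('s \<Rightarrow> 'a::finite \<Rightarrow> real) \<Rightarrow> ('s \<Rightarrow> 'a \<Rightarrow> real) \<Rightarrow> 's \<Rightarrow> real" where
  "rpol r pol s = (\<Sum>a\<in>UNIV. pol s a * r s a)"

definition V :: "('s::finite \<Rightarrow> 'a::finite \<Rightarrow> 's \<Rightarrow> real) \<Rightarrow> ('s \<Rightarrow> 'a \<Rightarrow> real) \<Rightarrow> real
    \<Rightarrow> ('s \<Rightarrow> 'a \<Rightarrow> real) \<Rightarrow> 's \<Rightarrow> real" where
  "V P r g pol s = (\<Sum>t. g ^ t * (\<Sum>s'\<in>UNIV. Pn P pol t s s' * rpol r pol s'))"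

definition Vmu :: "('s::finite \<Rightarrow> 'a::finite \<Rightarrow> 's \<Rightarrow> real) \<Rightarrow> ('s \<Rightarrow> 'a \<Rightarrow> real) \<Rightarrow> real
    \<Rightarrow> ('s \<Rightarrow> 'a \<Rightarrow> real) \<Rightarrow> ('s \<Rightarrow> real) \<Rightarrow> real" where
  "Vmu P r g pol \<mu> = (\<Sum>s\<in>UNIV. \<mu> s * V P r g pol s)"

definition Q :: "('s::finite \<Rightarrow> 'a::finite \<Rightarrow> 's \<Rightarrow> real) \<Rightarrow> ('s \<Rightarrow> 'a \<Rightarrow> real) \<Rightarrow> real
    \<Rightarrow> ('s \<Rightarrow> 'a \<Rightarrow> real) \<Rightarrow> 's \<Rightarrow> 'a \<Rightarrow> real" where
  "Q P r g pol s a = r s a + g * (\<Sum>s'\<in>UNIV. P s a s' * V P r g pol s')"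

definition dmu :: "('s::finite \<Rightarrow> 'a::finite \<Rightarrow> 's \<Rightarrow> real) \<Rightarrow> real
    \<Rightarrow> ('s \<Rightarrow> 'a \<Rightarrow> real) \<Rightarrow> ('s \<Rightarrow> real) \<Rightarrow> 's \<Rightarrow> real" where
  "dmu P g pol \<mu> s = (\<Sum>s0\<in>UNIV. \<mu> s0 * ((1 - g) * (\<Sum>t. g ^ t * Pn P pol t s0 s)))"

definition npg_update :: "('s::finite \<Rightarrow> 'a::finite \<Rightarrow> 's \<Rightarrow> real) \<Rightarrow> ('s \<Rightarrow> 'a \<Rightarrow> real) \<Rightarrow> real
    \<Rightarrow> real \<Rightarrow> ('s \<Rightarrow> 'a \<Rightarrow> real) \<Rightarrow> 's \<Rightarrow> 'a \<Rightarrow> ('s \<Rightarrow> 'a \<Rightarrow> real)" where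
  "npg_update P r g \<eta> \<theta> s a =
     \<theta>(s := (\<theta> s)(a := \<theta> s a + \<eta> *
        (Q P r g (softmax \<theta>) s a - V P r g (softmax \<theta>) s) / softmax \<theta> s a))"

end

theory Submission
  imports Defs
begin

text \<open>
  An update at \<open>(s, a)\<close> shifts one logit by \<open>x = \<eta> A / p\<close>, where \<open>p = \<pi>(a|s)\<close> and \<open>A\<close> is
  the advantage.  The new policy differs from \<open>\<pi>\<close> only at \<open>s\<close>, where its expected
  \<open>\<pi>\<close>-advantage is \<open>p (e\<^sup>x - 1) A / (1 - p + p e\<^sup>x) \<ge> \<eta> (1 - \<gamma>) p A\<^sup>2 / (1 + \<eta>)\<close>, using
  \<open>|A| \<le> 1 / (1 - \<gamma>)\<close>.  Since this expected advantage is nonnegative everywhere, the value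
  increases in every state, and at \<open>s\<close> by at least that amount; hence \<open>V(\<mu>)\<close> grows by at
  least \<open>\<mu>(s)\<close> times it.  Averaging over \<open>(s, a) \<sim> d\<^sub>\<mu>\<^sup>\<pi> \<times> \<pi>\<close>, keeping only \<open>a\<^sup>*(s)\<close> and bounding
  \<open>d\<^sub>\<mu>\<^sup>\<pi> \<ge> (1 - \<gamma>) \<mu>\<close> and \<open>\<pi>(a\<^sup>*(s)|s)\<close> from below by their minima leaves a multiple of
  \<open>\<Sum>\<^sub>s \<mu>(s) A(s, a\<^sup>*(s))\<^sup>2\<close>.  By the performance difference lemma
  \<open>(1 - \<gamma>) (V\<^sup>*(\<mu>) - V(\<mu>)) = \<Sum>\<^sub>s d\<^sub>\<mu>\<^sup>*(s) A(s, a\<^sup>*(s))\<close>, and Jensen's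
  inequality together with \<open>d\<^sub>\<mu>\<^sup>* \<le> \<parallel>d\<^sub>\<mu>\<^sup>*/\<mu>\<parallel>\<^sub>\<infinity> \<mu>\<close> bounds the square of this gap by
  \<open>\<parallel>d\<^sub>\<mu>\<^sup>*/\<mu>\<parallel>\<^sub>\<infinity> \<Sum>\<^sub>s \<mu>(s) A(s, a\<^sup>*(s))\<^sup>2\<close>.
\<close>

lemma divide_one_plus_le_one_minus_exp:
  fixes u :: real
  assumes "0 \<le> u"
  shows "u / (1 + u) \<le> 1 - exp (- u)"
proof -
  have "exp (- u) \<le> 1 / (1 + u)"
    using exp_ge_add_one_self[of u] assms by (simp add: exp_minus divide_simps)
  moreover have "u / (1 + u) = 1 - 1 / (1 + u)"
    using assms by (simp add: field_simps)
  ultimately show ?thesis by linarith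
qed

text \<open>Shifting the logit of an action with probability \<open>p\<close> and advantage \<open>A\<close> by \<open>u\<close> makes
  the expected advantage under the new softmax policy \<open>p (e\<^sup>u - 1) A / (1 - p + p e\<^sup>u)\<close>
  (lemma \<open>sum_softmax_update_adv\<close>).\<close>
lemma logit_shift_gain_ge:
  fixes p u :: real
  assumes p: "0 < p" "p \<le> 1"
  shows "u\<^sup>2 / (1 + \<bar>u\<bar>) \<le> u * (exp u - 1) / (1 - p + p * exp u)"
proof -
  define Z where "Z = 1 - p + p * exp u"
  have "0 < p * exp u" using p by simp
  then have Z_pos: "0 < Z"
    unfolding Z_def using p by linarith
  have num_nonneg: "0 \<le> u * (exp u - 1)"
    by (cases "0 \<le> u") (auto intro: mult_nonpos_nonpos)
  have "\<bar>u\<bar> * (1 - exp (- \<bar>u\<bar>)) \<le> u * (exp u - 1) / Z"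
  proof (cases "0 \<le> u")
    case True
    have "Z = exp u - (1 - p) * (exp u - 1)"
      unfolding Z_def by (simp add: algebra_simps)
    moreover have "0 \<le> (1 - p) * (exp u - 1)"
      using p True by simp
    ultimately have "Z \<le> exp u" by linarith
    then have "u * (exp u - 1) / exp u \<le> u * (exp u - 1) / Z"
      using Z_pos num_nonneg by (intro divide_left_mono) auto
    moreover have "u * (exp u - 1) / exp u = \<bar>u\<bar> * (1 - exp (- \<bar>u\<bar>))"
      using True by (simp add: exp_minus field_simps)
    ultimately show ?thesis by simp
  next
    case False
    have "p * (exp u - 1) \<le> 0"
      using p False by (simp add: mult_nonneg_nonpos)
    then have "Z \<le> 1"
      unfolding Z_def by (simp add: algebra_simps)
    then have "u * (exp u - 1) / 1 \<le> u * (exp u - 1) / Z"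
      using Z_pos num_nonneg by (intro divide_left_mono) auto
    moreover have "u * (exp u - 1) = \<bar>u\<bar> * (1 - exp (- \<bar>u\<bar>))"
      using False by (simp add: algebra_simps)
    ultimately show ?thesis by simp
  qed
  moreover have "\<bar>u\<bar> * (\<bar>u\<bar> / (1 + \<bar>u\<bar>)) \<le> \<bar>u\<bar> * (1 - exp (- \<bar>u\<bar>))"
    by (intro mult_left_mono divide_one_plus_le_one_minus_exp) simp_all
  moreover have "u\<^sup>2 / (1 + \<bar>u\<bar>) = \<bar>u\<bar> * (\<bar>u\<bar> / (1 + \<bar>u\<bar>))"
    by (simp add: power2_eq_square)
  ultimately show ?thesis unfolding Z_def by linarith
qed

lemma npg_logit_step_gain_ge:
  fixes p \<eta> A :: real
  assumes p: "0 < p" "p \<le> 1" and \<eta>: "0 < \<eta>"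
  shows "\<eta> * p * A\<^sup>2 / (p + \<eta> * \<bar>A\<bar>)
    \<le> p * (exp (\<eta> * A / p) - 1) * A / (1 - p + p * exp (\<eta> * A / p))"
proof -
  define u where "u = \<eta> * A / p"
  define q where "q = p + \<eta> * \<bar>A\<bar>"
  have "0 < q" unfolding q_def using p \<eta> by (intro add_pos_nonneg) auto
  have "1 + \<bar>u\<bar> = q / p"
    unfolding u_def q_def using p \<eta> by (simp add: abs_mult field_simps)
  have "\<eta> * p * A\<^sup>2 / q = p\<^sup>2 / \<eta> * (u\<^sup>2 * p / q)"
    unfolding u_def using p \<eta> \<open>0 < q\<close> by (simp add: field_simps power2_eq_square)
  also have "\<dots> = p\<^sup>2 / \<eta> * (u\<^sup>2 / (1 + \<bar>u\<bar>))"
    using \<open>1 + \<bar>u\<bar> = q / p\<close> by simp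
  also have "\<dots> \<le> p\<^sup>2 / \<eta> * (u * (exp u - 1) / (1 - p + p * exp u))"
    using logit_shift_gain_ge[OF p] \<eta> by (intro mult_left_mono) simp_all
  also have "\<dots> = p * (exp u - 1) * A / (1 - p + p * exp u)"
    using p \<eta> by (simp add: u_def power2_eq_square)
  finally show ?thesis unfolding u_def q_def .
qed

lemma weighted_square_sum_le:
  fixes w f :: "'s::finite \<Rightarrow> real"
  assumes "\<And>s. 0 \<le> w s" and "(\<Sum>s\<in>UNIV. w s) = 1"
  shows "(\<Sum>s\<in>UNIV. w s * f s)\<^sup>2 \<le> (\<Sum>s\<in>UNIV. w s * (f s)\<^sup>2)"
  using convex_on_sum[OF _ _ convex_power2, of UNIV w f] assms by simp

lemma le_Max_ratio_mult:
  fixes f \<mu> :: "'s::finite \<Rightarrow> real"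
  assumes "0 < \<mu> s"
  shows "f s \<le> Max (range (\<lambda>s. f s / \<mu> s)) * \<mu> s"
proof -
  have "f s / \<mu> s \<le> Max (range (\<lambda>s. f s / \<mu> s))" by (rule Max_ge) auto
  then show ?thesis by (simp add: pos_divide_le_eq[OF assms])
qed

lemma sum_det_policy:
  fixes f :: "'a::finite \<Rightarrow> real"
  shows "(\<Sum>b\<in>UNIV. det_policy astar s b * f b) = f (astar s)"
proof -
  have "det_policy astar s b * f b = (if b = astar s then f b else 0)" for b
    by (simp add: det_policy_def)
  then show ?thesis by simp
qed

lemma is_policy_det_policy: "is_policy (det_policy astar)"
  unfolding is_policy_def det_policy_def by auto

lemma softmax_pos: "0 < softmax \<theta> s a"
  unfolding softmax_def by (intro divide_pos_pos sum_pos) auto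

lemma sum_softmax: "(\<Sum>a\<in>UNIV. softmax \<theta> s a) = 1"
proof -
  have "0 < (\<Sum>a'\<in>UNIV. exp (\<theta> s a'))" by (intro sum_pos) auto
  then show ?thesis unfolding softmax_def by (simp add: sum_divide_distrib[symmetric])
qed

lemma is_policy_softmax: "is_policy (softmax \<theta>)"
  unfolding is_policy_def by (simp add: sum_softmax less_imp_le[OF softmax_pos])

lemma softmax_le_1: "softmax \<theta> s a \<le> 1"
proof -
  have "softmax \<theta> s a \<le> (\<Sum>b\<in>UNIV. softmax \<theta> s b)"
    by (rule member_le_sum) (auto intro: less_imp_le softmax_pos)
  then show ?thesis by (simp add: sum_softmax)
qed

lemma sum_mult_if_eq:
  fixes f :: "'a::finite \<Rightarrow> real"
  shows "(\<Sum>b\<in>UNIV. f b * (if b = a then c else 1)) = (\<Sum>b\<in>UNIV. f b) + f a * (c - 1)"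
proof -
  have "(\<Sum>b\<in>UNIV. f b * (if b = a then c else 1))
      = (\<Sum>b\<in>UNIV. f b + (if b = a then f a * (c - 1) else 0))"
    by (intro sum.cong) (auto simp: algebra_simps)
  then show ?thesis by (simp add: sum.distrib)
qed

lemma softmax_fun_upd:
  "softmax (\<theta>(s := (\<theta> s)(a := \<theta> s a + x))) s' b =
    (if s' = s then softmax \<theta> s b * (if b = a then exp x else 1)
                    / (1 - softmax \<theta> s a + softmax \<theta> s a * exp x)
     else softmax \<theta> s' b)"
proof (cases "s' = s")
  case False
  then show ?thesis unfolding softmax_def by simp
next
  case True
  define E where "E = (\<Sum>a'\<in>UNIV. exp (\<theta> s a'))"
  have "0 < E" unfolding E_def by (intro sum_pos) auto
  have exp_upd: "exp (((\<theta> s)(a := \<theta> s a + x)) b) = exp (\<theta> s b) * (if b = a then exp x else 1)" for b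
    by (simp add: exp_add)
  have "(\<Sum>b\<in>UNIV. exp (((\<theta> s)(a := \<theta> s a + x)) b)) = E + exp (\<theta> s a) * (exp x - 1)"
    unfolding exp_upd sum_mult_if_eq E_def ..
  also have "\<dots> = E * (1 - exp (\<theta> s a) / E + exp (\<theta> s a) / E * exp x)"
    using \<open>0 < E\<close> by (simp add: field_simps)
  finally have "softmax (\<theta>(s := (\<theta> s)(a := \<theta> s a + x))) s b
      = exp (\<theta> s b) * (if b = a then exp x else 1) / (E * (1 - exp (\<theta> s a) / E + exp (\<theta> s a) / E * exp x))"
    unfolding softmax_def by (simp only: fun_upd_same exp_upd)
  then show ?thesis
    using True \<open>0 < E\<close> unfolding softmax_def E_def[symmetric] by simp
qed

locale mdp =
  fixes P :: "'s::finite \<Rightarrow> 'a::finite \<Rightarrow> 's \<Rightarrow> real"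
    and r :: "'s \<Rightarrow> 'a \<Rightarrow> real"
    and g :: real
  assumes r_range: "\<And>s a. 0 \<le> r s a \<and> r s a \<le> 1"
    and P_nonneg: "\<And>s a s'. 0 \<le> P s a s'"
    and P_sum: "\<And>s a. (\<Sum>s'\<in>UNIV. P s a s') = 1"
    and g_nonneg: "0 \<le> g" and g_less_1: "g < 1"
begin

lemma ppol_nonneg: "is_policy pol \<Longrightarrow> 0 \<le> ppol P pol s s'"
  unfolding ppol_def is_policy_def by (auto intro!: sum_nonneg simp: P_nonneg)

lemma sum_ppol: "is_policy pol \<Longrightarrow> (\<Sum>s'\<in>UNIV. ppol P pol s s') = 1"
  unfolding ppol_def is_policy_def
  by (subst sum.swap) (simp add: sum_distrib_left[symmetric] P_sum)

lemma Pn_nonneg: "is_policy pol \<Longrightarrow> 0 \<le> Pn P pol n s s'"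
  by (induction n arbitrary: s') (auto intro!: sum_nonneg mult_nonneg_nonneg ppol_nonneg)

lemma sum_Pn: "is_policy pol \<Longrightarrow> (\<Sum>s'\<in>UNIV. Pn P pol n s s') = 1"
proof (induction n)
  case (Suc n)
  then show ?case
    by (simp, subst sum.swap) (simp add: sum_distrib_left[symmetric] sum_ppol)
qed simp

lemma sum_Pn_0: "(\<Sum>u\<in>UNIV. Pn P pol 0 s u * f u) = f s"
proof -
  have "Pn P pol 0 s u * f u = (if u = s then f s else 0)" for u by auto
  then show ?thesis by simp
qed

lemma Pn_le_1: "is_policy pol \<Longrightarrow> Pn P pol n s s' \<le> 1"
  using member_le_sum[of s' UNIV "Pn P pol n s"] by (simp add: Pn_nonneg sum_Pn)

lemma Pn_Suc_left: "Pn P pol (Suc n) s s' = (\<Sum>u\<in>UNIV. ppol P pol s u * Pn P pol n u s')"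
proof (induction n arbitrary: s')
  case 0
  have "ppol P pol s u * Pn P pol 0 u s' = (if u = s' then ppol P pol s s' else 0)" for u
    by simp
  then show ?case using sum_Pn_0[of pol s "\<lambda>u. ppol P pol u s'"] by simp
next
  case (Suc n)
  have "Pn P pol (Suc (Suc n)) s s'
      = (\<Sum>v\<in>UNIV. \<Sum>u\<in>UNIV. ppol P pol s u * Pn P pol n u v * ppol P pol v s')"
    by (simp only: Pn.simps(2)[of P pol "Suc n"] Suc sum_distrib_right)
  also have "\<dots> = (\<Sum>u\<in>UNIV. ppol P pol s u * Pn P pol (Suc n) u s')"
    by (subst sum.swap) (simp add: sum_distrib_left mult.assoc)
  finally show ?case .
qed

lemma rpol_nonneg: "is_policy pol \<Longrightarrow> 0 \<le> rpol r pol s"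
  unfolding rpol_def is_policy_def using r_range by (intro sum_nonneg mult_nonneg_nonneg) auto

lemma rpol_le_1: "is_policy pol \<Longrightarrow> rpol r pol s \<le> 1"
proof -
  assume "is_policy pol"
  then have "rpol r pol s \<le> (\<Sum>a\<in>UNIV. pol s a * 1)"
    unfolding rpol_def is_policy_def using r_range by (intro sum_mono mult_left_mono) auto
  with \<open>is_policy pol\<close> show ?thesis by (simp add: is_policy_def)
qed

lemma abs_sum_Pn_mult_le:
  assumes "is_policy pol" "\<And>u. \<bar>f u\<bar> \<le> B"
  shows "\<bar>\<Sum>u\<in>UNIV. Pn P pol n s u * f u\<bar> \<le> B"
proof -
  have "\<bar>\<Sum>u\<in>UNIV. Pn P pol n s u * f u\<bar> \<le> (\<Sum>u\<in>UNIV. Pn P pol n s u * B)"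
    using assms Pn_nonneg
    by (intro order.trans[OF sum_abs] sum_mono) (simp add: abs_mult mult_left_mono)
  also have "\<dots> = B" using assms by (simp add: sum_Pn sum_distrib_right[symmetric])
  finally show ?thesis .
qed

lemma summable_discounted:
  assumes "\<And>t. \<bar>f t\<bar> \<le> 1"
  shows "summable (\<lambda>t. g ^ t * f t)"
proof (rule summable_comparison_test[OF _ summable_geometric[of g]])
  show "\<exists>N. \<forall>n\<ge>N. norm (g ^ n * f n) \<le> g ^ n"
    using assms g_nonneg by (auto simp: abs_mult intro!: mult_left_le)
  show "norm g < 1" using g_nonneg g_less_1 by simp
qed

definition reward_at :: "('s \<Rightarrow> 'a \<Rightarrow> real) \<Rightarrow> nat \<Rightarrow> 's \<Rightarrow> real" where
  "reward_at pol t s = (\<Sum>s'\<in>UNIV. Pn P pol t s s' * rpol r pol s')"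

lemma reward_at_Suc: "reward_at pol (Suc t) s = (\<Sum>u\<in>UNIV. ppol P pol s u * reward_at pol t u)"
  unfolding reward_at_def Pn_Suc_left sum_distrib_right sum_distrib_left
  by (subst sum.swap) (simp add: mult.assoc)

lemma sums_V: "is_policy pol \<Longrightarrow> (\<lambda>t. g ^ t * reward_at pol t s) sums V P r g pol s"
  unfolding V_def reward_at_def[symmetric]
  by (intro summable_sums summable_discounted)
     (simp add: reward_at_def abs_sum_Pn_mult_le rpol_nonneg rpol_le_1)

lemma V_bellman:
  assumes "is_policy pol"
  shows "V P r g pol s = rpol r pol s + g * (\<Sum>u\<in>UNIV. ppol P pol s u * V P r g pol u)"
proof -
  have "(\<lambda>t. \<Sum>u\<in>UNIV. g * ppol P pol s u * (g ^ t * reward_at pol t u))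
      sums (\<Sum>u\<in>UNIV. g * ppol P pol s u * V P r g pol u)"
    by (intro sums_sum sums_mult sums_V assms)
  moreover have "(\<Sum>u\<in>UNIV. g * ppol P pol s u * (g ^ t * reward_at pol t u))
      = g ^ Suc t * reward_at pol (Suc t) s" for t
    by (simp add: reward_at_Suc sum_distrib_left mult_ac)
  ultimately have "(\<lambda>t. g ^ Suc t * reward_at pol (Suc t) s)
      sums (g * (\<Sum>u\<in>UNIV. ppol P pol s u * V P r g pol u))"
    by (simp add: sum_distrib_left mult.assoc)
  then have "(\<lambda>t. g ^ t * reward_at pol t s)
      sums (g * (\<Sum>u\<in>UNIV. ppol P pol s u * V P r g pol u) + reward_at pol 0 s)"
    by (subst (asm) sums_Suc_iff) simp
  moreover have "reward_at pol 0 s = rpol r pol s"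
    unfolding reward_at_def by (rule sum_Pn_0)
  ultimately show ?thesis
    using sums_unique2[OF sums_V[OF assms]] by simp
qed

definition adv :: "('s \<Rightarrow> 'a \<Rightarrow> real) \<Rightarrow> 's \<Rightarrow> 'a \<Rightarrow> real" where
  "adv pol s a = Q P r g pol s a - V P r g pol s"

lemma sum_policy_Q:
  "(\<Sum>b\<in>UNIV. pol' u b * Q P r g pol u b)
     = rpol r pol' u + g * (\<Sum>w\<in>UNIV. ppol P pol' u w * V P r g pol w)"
proof -
  have "(\<Sum>b\<in>UNIV. pol' u b * Q P r g pol u b)
      = rpol r pol' u + g * (\<Sum>b\<in>UNIV. \<Sum>w\<in>UNIV. pol' u b * P u b w * V P r g pol w)"
    unfolding Q_def rpol_def by (simp add: distrib_left sum.distrib sum_distrib_left mult_ac)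
  also have "(\<Sum>b\<in>UNIV. \<Sum>w\<in>UNIV. pol' u b * P u b w * V P r g pol w)
      = (\<Sum>w\<in>UNIV. ppol P pol' u w * V P r g pol w)"
    unfolding ppol_def sum_distrib_right by (rule sum.swap)
  finally show ?thesis .
qed

lemma sum_policy_adv:
  assumes "is_policy pol'"
  shows "(\<Sum>b\<in>UNIV. pol' u b * adv pol u b)
     = (\<Sum>b\<in>UNIV. pol' u b * Q P r g pol u b) - V P r g pol u"
  using assms unfolding adv_def is_policy_def
  by (simp add: right_diff_distrib sum_subtractf sum_distrib_right[symmetric])

lemma sum_policy_adv_self: "is_policy pol \<Longrightarrow> (\<Sum>b\<in>UNIV. pol u b * adv pol u b) = 0"
  by (simp add: sum_policy_adv sum_policy_Q V_bellman[symmetric])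

lemma V_diff_recursion:
  assumes "is_policy pol'"
  shows "V P r g pol' u - V P r g pol u = (\<Sum>b\<in>UNIV. pol' u b * adv pol u b)
     + g * (\<Sum>w\<in>UNIV. ppol P pol' u w * (V P r g pol' w - V P r g pol w))"
  using V_bellman[OF assms, of u] sum_policy_Q[of pol' u pol]
  by (simp add: sum_policy_adv[OF assms] right_diff_distrib sum_subtractf algebra_simps)

text \<open>At a minimiser of \<open>D\<close> the averaging term is at least the minimum, and \<open>g < 1\<close>.\<close>
lemma fixpoint_nonneg:
  assumes pol: "is_policy pol"
    and fixpoint: "\<And>u. D u = \<delta> u + g * (\<Sum>w\<in>UNIV. ppol P pol u w * D w)"
    and "\<And>u. 0 \<le> \<delta> u"
  shows "0 \<le> D u"
proof -
  have "Min (range D) \<in> range D" by (rule Min_in) auto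
  then obtain u0 where u0: "D u0 = Min (range D)" by (metis rangeE)
  have min_le: "D u0 \<le> D w" for w
    unfolding u0 by (rule Min_le) auto
  have "D u0 = (\<Sum>w\<in>UNIV. ppol P pol u0 w * D u0)"
    by (simp add: sum_distrib_right[symmetric] sum_ppol[OF pol])
  also have "\<dots> \<le> (\<Sum>w\<in>UNIV. ppol P pol u0 w * D w)"
    using min_le ppol_nonneg[OF pol] by (intro sum_mono mult_left_mono) auto
  finally have "g * D u0 \<le> g * (\<Sum>w\<in>UNIV. ppol P pol u0 w * D w)"
    using g_nonneg by (rule mult_left_mono)
  then have "0 \<le> (1 - g) * D u0"
    using fixpoint[of u0] assms(3)[of u0] by (simp add: algebra_simps)
  then have "0 \<le> D u0"
    using g_less_1 by (simp add: zero_le_mult_iff)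
  then show ?thesis using min_le[of u] by linarith
qed

lemma V_nonneg: "is_policy pol \<Longrightarrow> 0 \<le> V P r g pol s"
  by (rule fixpoint_nonneg[where \<delta> = "rpol r pol"]) (auto intro: V_bellman rpol_nonneg)

lemma V_le: "is_policy pol \<Longrightarrow> V P r g pol s \<le> 1 / (1 - g)"
proof -
  assume pol: "is_policy pol"
  define c where "c = 1 / (1 - g)"
  have "c = 1 + g * c" unfolding c_def using g_less_1 by (simp add: field_simps)
  then have "c - V P r g pol u = (1 - rpol r pol u)
      + g * (\<Sum>w\<in>UNIV. ppol P pol u w * (c - V P r g pol w))" for u
    using V_bellman[OF pol, of u]
    by (simp add: right_diff_distrib sum_subtractf sum_distrib_right[symmetric] sum_ppol[OF pol])
  then have "0 \<le> c - V P r g pol s"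
    by (rule fixpoint_nonneg[OF pol]) (simp add: rpol_le_1[OF pol])
  then show ?thesis unfolding c_def by simp
qed

lemma abs_adv_le: "is_policy pol \<Longrightarrow> \<bar>adv pol s a\<bar> \<le> 1 / (1 - g)"
proof -
  assume pol: "is_policy pol"
  define EV where "EV = (\<Sum>w\<in>UNIV. P s a w * V P r g pol w)"
  have "0 \<le> EV"
    unfolding EV_def using pol by (intro sum_nonneg mult_nonneg_nonneg P_nonneg V_nonneg)
  moreover have "EV \<le> (\<Sum>w\<in>UNIV. P s a w * (1 / (1 - g)))"
    unfolding EV_def using pol by (intro sum_mono mult_left_mono P_nonneg V_le)
  then have "EV \<le> 1 / (1 - g)"
    by (simp add: sum_divide_distrib[symmetric] P_sum)
  moreover have "1 + g * (1 / (1 - g)) = 1 / (1 - g)"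
    using g_less_1 by (simp add: field_simps)
  moreover have "g * EV \<le> g * (1 / (1 - g))"
    using \<open>EV \<le> 1 / (1 - g)\<close> g_nonneg by (rule mult_left_mono)
  moreover have "0 \<le> g * EV"
    using \<open>0 \<le> EV\<close> g_nonneg by simp
  moreover have "adv pol s a = r s a + g * EV - V P r g pol s"
    unfolding adv_def Q_def EV_def ..
  ultimately show ?thesis
    using V_nonneg[OF pol, of s] V_le[OF pol, of s] r_range[of s a]
    unfolding abs_le_iff by linarith
qed

lemma policy_improvement:
  assumes pol': "is_policy pol'"
    and improving: "\<And>w. 0 \<le> (\<Sum>b\<in>UNIV. pol' w b * adv pol w b)"
  shows "(\<Sum>b\<in>UNIV. pol' u b * adv pol u b) \<le> V P r g pol' u - V P r g pol u"
proof -
  have diff_nonneg: "0 \<le> V P r g pol' w - V P r g pol w" for w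
    by (rule fixpoint_nonneg[OF pol' V_diff_recursion[OF pol'] improving])
  have "0 \<le> g * (\<Sum>w\<in>UNIV. ppol P pol' u w * (V P r g pol' w - V P r g pol w))"
    using g_nonneg diff_nonneg ppol_nonneg[OF pol'] by (intro mult_nonneg_nonneg sum_nonneg) auto
  then show ?thesis using V_diff_recursion[OF pol', of u pol] by linarith
qed

lemma fixpoint_sums:
  assumes pol: "is_policy pol"
    and fixpoint: "\<And>u. D u = \<delta> u + g * (\<Sum>w\<in>UNIV. ppol P pol u w * D w)"
  shows "(\<lambda>t. g ^ t * (\<Sum>u\<in>UNIV. Pn P pol t s u * \<delta> u)) sums D s"
proof -
  have partial: "D s = (\<Sum>t<n. g ^ t * (\<Sum>u\<in>UNIV. Pn P pol t s u * \<delta> u))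
      + g ^ n * (\<Sum>u\<in>UNIV. Pn P pol n s u * D u)" for n
  proof (induction n)
    case 0
    show ?case using sum_Pn_0[of pol s D] by simp
  next
    case (Suc n)
    have "(\<Sum>u\<in>UNIV. Pn P pol n s u * D u) = (\<Sum>u\<in>UNIV. Pn P pol n s u * \<delta> u)
        + g * (\<Sum>u\<in>UNIV. \<Sum>w\<in>UNIV. Pn P pol n s u * ppol P pol u w * D w)"
      by (subst fixpoint) (simp add: distrib_left sum.distrib sum_distrib_left mult_ac)
    also have "(\<Sum>u\<in>UNIV. \<Sum>w\<in>UNIV. Pn P pol n s u * ppol P pol u w * D w)
        = (\<Sum>w\<in>UNIV. Pn P pol (Suc n) s w * D w)"
      by (subst sum.swap) (simp only: Pn.simps(2) sum_distrib_right)
    finally show ?case using Suc by (simp add: algebra_simps)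
  qed
  define B where "B = (\<Sum>u\<in>UNIV. \<bar>D u\<bar>)"
  have B: "\<bar>D u\<bar> \<le> B" for u
    unfolding B_def by (rule member_le_sum) auto
  have "(\<lambda>n. g ^ n * (\<Sum>u\<in>UNIV. Pn P pol n s u * D u)) \<longlonglongrightarrow> 0"
  proof (rule Lim_null_comparison)
    show "\<forall>\<^sub>F n in sequentially. norm (g ^ n * (\<Sum>u\<in>UNIV. Pn P pol n s u * D u)) \<le> g ^ n * B"
      using abs_sum_Pn_mult_le[OF pol B] g_nonneg
      by (intro always_eventually allI) (simp add: abs_mult mult_left_mono)
    show "(\<lambda>n. g ^ n * B) \<longlonglongrightarrow> 0"
      using g_nonneg g_less_1 by (intro tendsto_mult_left_zero LIMSEQ_power_zero) simp
  qed
  then have "(\<lambda>n. D s - g ^ n * (\<Sum>u\<in>UNIV. Pn P pol n s u * D u)) \<longlonglongrightarrow> D s - 0"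
    by (intro tendsto_diff tendsto_const)
  moreover have "D s - g ^ n * (\<Sum>u\<in>UNIV. Pn P pol n s u * D u)
      = (\<Sum>t<n. g ^ t * (\<Sum>u\<in>UNIV. Pn P pol t s u * \<delta> u))" for n
    using partial[of n] by linarith
  ultimately show ?thesis
    unfolding sums_def by simp
qed

definition visits :: "('s \<Rightarrow> 'a \<Rightarrow> real) \<Rightarrow> 's \<Rightarrow> 's \<Rightarrow> real" where
  "visits pol s0 u = (\<Sum>t. g ^ t * Pn P pol t s0 u)"

lemma sums_visits: "is_policy pol \<Longrightarrow> (\<lambda>t. g ^ t * Pn P pol t s0 u) sums visits pol s0 u"
  unfolding visits_def
  by (intro summable_sums summable_discounted) (simp add: Pn_nonneg Pn_le_1)

lemma visits_nonneg: "is_policy pol \<Longrightarrow> 0 \<le> visits pol s0 u"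
  unfolding visits_def
  by (intro suminf_nonneg sums_summable[OF sums_visits]) (simp_all add: g_nonneg Pn_nonneg)

lemma visits_diag_ge_1: "is_policy pol \<Longrightarrow> 1 \<le> visits pol u u"
  using sum_le_suminf[of "\<lambda>t. g ^ t * Pn P pol t u u" "{0}"]
  by (simp add: visits_def sums_summable[OF sums_visits] g_nonneg Pn_nonneg)

lemma sum_visits: "is_policy pol \<Longrightarrow> (\<Sum>u\<in>UNIV. visits pol s0 u) = 1 / (1 - g)"
proof -
  assume pol: "is_policy pol"
  have "(\<lambda>t. \<Sum>u\<in>UNIV. g ^ t * Pn P pol t s0 u) sums (\<Sum>u\<in>UNIV. visits pol s0 u)"
    by (intro sums_sum sums_visits pol)
  moreover have "(\<lambda>t. g ^ t) sums (1 / (1 - g))"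
    using g_nonneg g_less_1 by (intro geometric_sums) simp
  ultimately show ?thesis
    using sums_unique2 by (simp add: sum_distrib_left[symmetric] sum_Pn[OF pol])
qed

lemma fixpoint_eq_visits:
  assumes pol: "is_policy pol"
    and fixpoint: "\<And>u. D u = \<delta> u + g * (\<Sum>w\<in>UNIV. ppol P pol u w * D w)"
  shows "D s = (\<Sum>u\<in>UNIV. visits pol s u * \<delta> u)"
proof -
  have "(\<lambda>t. \<Sum>u\<in>UNIV. g ^ t * Pn P pol t s u * \<delta> u) sums (\<Sum>u\<in>UNIV. visits pol s u * \<delta> u)"
    by (intro sums_sum sums_mult2 sums_visits pol)
  then show ?thesis
    using sums_unique2[OF fixpoint_sums[OF pol fixpoint, of s]]
    by (simp add: sum_distrib_left mult.assoc)
qed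

lemma dmu_eq_visits: "dmu P g pol \<mu> u = (1 - g) * (\<Sum>s0\<in>UNIV. \<mu> s0 * visits pol s0 u)"
  unfolding dmu_def visits_def by (simp add: sum_distrib_left mult.left_commute)

context
  fixes \<mu> :: "'s \<Rightarrow> real"
  assumes mu_nonneg: "\<And>s. 0 \<le> \<mu> s" and mu_sum: "(\<Sum>s\<in>UNIV. \<mu> s) = 1"
begin

lemma dmu_nonneg: "is_policy pol \<Longrightarrow> 0 \<le> dmu P g pol \<mu> u"
  unfolding dmu_eq_visits using g_less_1 mu_nonneg visits_nonneg
  by (intro mult_nonneg_nonneg sum_nonneg) auto

lemma dmu_ge: "is_policy pol \<Longrightarrow> (1 - g) * \<mu> u \<le> dmu P g pol \<mu> u"
proof -
  assume pol: "is_policy pol"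
  have "\<mu> u \<le> \<mu> u * visits pol u u"
    using mu_nonneg[of u] visits_diag_ge_1[OF pol, of u] by (simp add: mult_le_cancel_left1)
  also have "\<dots> \<le> (\<Sum>s0\<in>UNIV. \<mu> s0 * visits pol s0 u)"
    using mu_nonneg visits_nonneg[OF pol] by (intro member_le_sum) auto
  finally show ?thesis
    unfolding dmu_eq_visits using g_less_1 by simp
qed

lemma sum_dmu: "is_policy pol \<Longrightarrow> (\<Sum>u\<in>UNIV. dmu P g pol \<mu> u) = 1"
proof -
  assume pol: "is_policy pol"
  have "(\<Sum>u\<in>UNIV. \<Sum>s0\<in>UNIV. \<mu> s0 * visits pol s0 u)
      = (\<Sum>s0\<in>UNIV. \<mu> s0 * (\<Sum>u\<in>UNIV. visits pol s0 u))"
    by (subst sum.swap) (simp add: sum_distrib_left)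
  also have "\<dots> = 1 / (1 - g)"
    by (simp add: sum_visits[OF pol] sum_divide_distrib[symmetric] mu_sum)
  finally show ?thesis
    unfolding dmu_eq_visits using g_less_1 by (simp add: sum_distrib_left[symmetric])
qed

end

lemma sum_mu_fixpoint:
  assumes pol: "is_policy pol"
    and fixpoint: "\<And>u. D u = \<delta> u + g * (\<Sum>w\<in>UNIV. ppol P pol u w * D w)"
  shows "(\<Sum>s0\<in>UNIV. \<mu> s0 * D s0) = (\<Sum>u\<in>UNIV. dmu P g pol \<mu> u * \<delta> u) / (1 - g)"
proof -
  have "(\<Sum>s0\<in>UNIV. \<mu> s0 * D s0) = (\<Sum>s0\<in>UNIV. \<Sum>u\<in>UNIV. \<mu> s0 * visits pol s0 u * \<delta> u)"
    unfolding fixpoint_eq_visits[OF pol fixpoint] by (simp add: sum_distrib_left mult.assoc)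
  also have "\<dots> = (\<Sum>u\<in>UNIV. (\<Sum>s0\<in>UNIV. \<mu> s0 * visits pol s0 u) * \<delta> u)"
    by (subst sum.swap) (simp add: sum_distrib_right)
  also have "\<dots> = (\<Sum>u\<in>UNIV. dmu P g pol \<mu> u * \<delta> u) / (1 - g)"
    using g_less_1 by (simp add: dmu_eq_visits sum_divide_distrib)
  finally show ?thesis .
qed

theorem performance_difference:
  assumes "is_policy pol'"
  shows "Vmu P r g pol' \<mu> - Vmu P r g pol \<mu>
     = (\<Sum>u\<in>UNIV. dmu P g pol' \<mu> u * (\<Sum>b\<in>UNIV. pol' u b * adv pol u b)) / (1 - g)"
  unfolding Vmu_def right_diff_distrib[symmetric] sum_subtractf[symmetric]
  by (rule sum_mu_fixpoint[OF assms, where D = "\<lambda>u. V P r g pol' u - V P r g pol u"])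
    (rule V_diff_recursion[OF assms])

lemma npg_update_eq:
  "npg_update P r g \<eta> \<theta> s a
     = \<theta>(s := (\<theta> s)(a := \<theta> s a + \<eta> * adv (softmax \<theta>) s a / softmax \<theta> s a))"
  unfolding npg_update_def adv_def ..

lemma sum_softmax_update_adv:
  "(\<Sum>b\<in>UNIV. softmax (\<theta>(s := (\<theta> s)(a := \<theta> s a + x))) u b * adv (softmax \<theta>) u b)
     = (if u = s then softmax \<theta> s a * (exp x - 1) * adv (softmax \<theta>) s a
                      / (1 - softmax \<theta> s a + softmax \<theta> s a * exp x)
        else 0)"
proof (cases "u = s")
  case False
  then show ?thesis
    by (simp add: softmax_fun_upd sum_policy_adv_self is_policy_softmax)
next
  case True
  define Z where "Z = 1 - softmax \<theta> s a + softmax \<theta> s a * exp x"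
  have "(\<Sum>b\<in>UNIV. softmax (\<theta>(s := (\<theta> s)(a := \<theta> s a + x))) s b * adv (softmax \<theta>) s b)
      = (\<Sum>b\<in>UNIV. softmax \<theta> s b * adv (softmax \<theta>) s b * (if b = a then exp x else 1)) / Z"
    unfolding softmax_fun_upd Z_def sum_divide_distrib by (intro sum.cong) auto
  also have "\<dots> = ((\<Sum>b\<in>UNIV. softmax \<theta> s b * adv (softmax \<theta>) s b)
                      + softmax \<theta> s a * adv (softmax \<theta>) s a * (exp x - 1)) / Z"
    by (simp only: sum_mult_if_eq)
  finally show ?thesis
    using True unfolding Z_def by (simp add: sum_policy_adv_self is_policy_softmax mult_ac)
qed

definition npg_gain_bound :: "real \<Rightarrow> ('s \<Rightarrow> 'a \<Rightarrow> real) \<Rightarrow> 's \<Rightarrow> 'a \<Rightarrow> real" where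
  "npg_gain_bound \<eta> \<theta> s a = \<eta> * (1 - g) * softmax \<theta> s a * (adv (softmax \<theta>) s a)\<^sup>2 / (1 + \<eta>)"

lemma npg_gain_bound_nonneg: "0 < \<eta> \<Longrightarrow> 0 \<le> npg_gain_bound \<eta> \<theta> s a"
  unfolding npg_gain_bound_def using g_less_1 softmax_pos[of \<theta> s a] by simp

lemma npg_update_local_gain:
  fixes \<theta> :: "'s \<Rightarrow> 'a \<Rightarrow> real" and s :: 's and a :: 'a
  assumes \<eta>: "0 < \<eta>"
  defines "x \<equiv> \<eta> * adv (softmax \<theta>) s a / softmax \<theta> s a"
  shows "npg_gain_bound \<eta> \<theta> s a
    \<le> softmax \<theta> s a * (exp x - 1) * adv (softmax \<theta>) s a
       / (1 - softmax \<theta> s a + softmax \<theta> s a * exp x)"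
proof -
  define p where "p = softmax \<theta> s a"
  define A where "A = adv (softmax \<theta>) s a"
  have p: "0 < p" "p \<le> 1" unfolding p_def by (simp_all add: softmax_pos softmax_le_1)
  have "\<eta> * \<bar>A\<bar> \<le> \<eta> * (1 / (1 - g))"
    unfolding A_def using \<eta> abs_adv_le[OF is_policy_softmax] by (intro mult_left_mono) auto
  moreover have "1 \<le> 1 / (1 - g)" using g_nonneg g_less_1 by simp
  ultimately have "p + \<eta> * \<bar>A\<bar> \<le> (1 + \<eta>) / (1 - g)"
    using p by (simp add: add_divide_distrib)
  then have "\<eta> * p * A\<^sup>2 / ((1 + \<eta>) / (1 - g)) \<le> \<eta> * p * A\<^sup>2 / (p + \<eta> * \<bar>A\<bar>)"
    using p \<eta> g_less_1 by (intro divide_left_mono mult_pos_pos add_pos_nonneg) auto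
  also have "\<dots> \<le> p * (exp x - 1) * A / (1 - p + p * exp x)"
    unfolding x_def A_def[symmetric] p_def[symmetric] by (rule npg_logit_step_gain_ge[OF p \<eta>])
  finally show ?thesis
    using g_less_1 unfolding npg_gain_bound_def A_def p_def by (simp add: field_simps)
qed

lemma npg_update_adv_ge:
  assumes "0 < \<eta>"
  shows "(if u = s then npg_gain_bound \<eta> \<theta> s a else 0)
    \<le> (\<Sum>b\<in>UNIV. softmax (npg_update P r g \<eta> \<theta> s a) u b * adv (softmax \<theta>) u b)"
  unfolding npg_update_eq sum_softmax_update_adv using npg_update_local_gain[OF assms] by simp

lemma npg_update_V_gain:
  assumes \<eta>: "0 < \<eta>"
  shows "(if u = s then npg_gain_bound \<eta> \<theta> s a else 0)
    \<le> V P r g (softmax (npg_update P r g \<eta> \<theta> s a)) u - V P r g (softmax \<theta>) u"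
proof -
  have "0 \<le> (\<Sum>b\<in>UNIV. softmax (npg_update P r g \<eta> \<theta> s a) w b * adv (softmax \<theta>) w b)" for w
    using npg_update_adv_ge[OF \<eta>, of w s \<theta> a] npg_gain_bound_nonneg[OF \<eta>, of \<theta> s a]
    by (auto split: if_splits)
  then show ?thesis
    using npg_update_adv_ge[OF \<eta>] policy_improvement[OF is_policy_softmax] order.trans by blast
qed

lemma npg_update_V_mono:
  "0 < \<eta> \<Longrightarrow> 0 \<le> V P r g (softmax (npg_update P r g \<eta> \<theta> s a)) u - V P r g (softmax \<theta>) u"
  using npg_update_V_gain[of \<eta> u s \<theta> a] npg_gain_bound_nonneg[of \<eta> \<theta> s a]
  by (auto split: if_splits)

lemma npg_update_Vmu_gain:
  assumes \<eta>: "0 < \<eta>" and mu_nonneg: "\<And>s. 0 \<le> \<mu> s"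
  shows "\<mu> s * npg_gain_bound \<eta> \<theta> s a
    \<le> Vmu P r g (softmax (npg_update P r g \<eta> \<theta> s a)) \<mu> - Vmu P r g (softmax \<theta>) \<mu>"
proof -
  have "\<mu> s * npg_gain_bound \<eta> \<theta> s a
      = (\<Sum>u\<in>UNIV. \<mu> u * (if u = s then npg_gain_bound \<eta> \<theta> s a else 0))"
    by (simp add: if_distrib cong: if_cong)
  also have "\<dots> \<le> (\<Sum>u\<in>UNIV. \<mu> u * (V P r g (softmax (npg_update P r g \<eta> \<theta> s a)) u
                                    - V P r g (softmax \<theta>) u))"
    using npg_update_V_gain[OF \<eta>] mu_nonneg by (intro sum_mono mult_left_mono)
  finally show ?thesis
    unfolding Vmu_def by (simp add: right_diff_distrib sum_subtractf)
qed

lemma value_gap_sq_le: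
  assumes mu_nonneg: "\<And>s. 0 \<le> \<mu> s" and mu_sum: "(\<Sum>s\<in>UNIV. \<mu> s) = 1"
    and pol': "is_policy pol'"
    and ratio: "\<And>s. dmu P g pol' \<mu> s \<le> M * \<mu> s"
  shows "((1 - g) * (Vmu P r g pol' \<mu> - Vmu P r g pol \<mu>))\<^sup>2
    \<le> M * (\<Sum>s\<in>UNIV. \<mu> s * (\<Sum>b\<in>UNIV. pol' s b * adv pol s b)\<^sup>2)"
proof -
  let ?d = "dmu P g pol' \<mu>" and ?f = "\<lambda>s. \<Sum>b\<in>UNIV. pol' s b * adv pol s b"
  have "(1 - g) * (Vmu P r g pol' \<mu> - Vmu P r g pol \<mu>) = (\<Sum>s\<in>UNIV. ?d s * ?f s)"
    using g_less_1 by (simp add: performance_difference[OF pol'])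
  moreover have "(\<Sum>s\<in>UNIV. ?d s * ?f s)\<^sup>2 \<le> (\<Sum>s\<in>UNIV. ?d s * (?f s)\<^sup>2)"
    by (intro weighted_square_sum_le dmu_nonneg[OF mu_nonneg mu_sum pol']
        sum_dmu[OF mu_nonneg mu_sum pol'])
  moreover have "(\<Sum>s\<in>UNIV. ?d s * (?f s)\<^sup>2) \<le> (\<Sum>s\<in>UNIV. M * \<mu> s * (?f s)\<^sup>2)"
    using ratio by (intro sum_mono mult_right_mono) simp_all
  ultimately show ?thesis
    by (simp add: sum_distrib_left mult.assoc)
qed

lemma expected_npg_gain_ge:
  fixes \<theta> :: "'s \<Rightarrow> 'a \<Rightarrow> real"
  assumes \<eta>: "0 < \<eta>" and mu_nonneg: "\<And>s. 0 \<le> \<mu> s" and mu_sum: "(\<Sum>s\<in>UNIV. \<mu> s) = 1"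
  shows "\<eta> * (1 - g) / (1 + \<eta>)
      * (\<Sum>s\<in>UNIV. \<Sum>a\<in>UNIV. dmu P g (softmax \<theta>) \<mu> s * \<mu> s * (softmax \<theta> s a * adv (softmax \<theta>) s a)\<^sup>2)
    \<le> (\<Sum>s\<in>UNIV. \<Sum>a\<in>UNIV. dmu P g (softmax \<theta>) \<mu> s * softmax \<theta> s a
          * Vmu P r g (softmax (npg_update P r g \<eta> \<theta> s a)) \<mu>)
      - Vmu P r g (softmax \<theta>) \<mu>"
proof -
  let ?w = "\<lambda>s a. dmu P g (softmax \<theta>) \<mu> s * softmax \<theta> s a"
  let ?gain = "\<lambda>s a. Vmu P r g (softmax (npg_update P r g \<eta> \<theta> s a)) \<mu> - Vmu P r g (softmax \<theta>) \<mu>"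
  have w_nonneg: "0 \<le> ?w s a" for s a
    using dmu_nonneg[OF mu_nonneg mu_sum is_policy_softmax] softmax_pos[of \<theta> s a]
    by (simp add: less_imp_le)
  have w_sum: "(\<Sum>s\<in>UNIV. \<Sum>a\<in>UNIV. ?w s a) = 1"
    by (simp add: sum_distrib_left[symmetric] sum_softmax sum_dmu[OF mu_nonneg mu_sum is_policy_softmax])
  have "\<eta> * (1 - g) / (1 + \<eta>)
      * (\<Sum>s\<in>UNIV. \<Sum>a\<in>UNIV. dmu P g (softmax \<theta>) \<mu> s * \<mu> s * (softmax \<theta> s a * adv (softmax \<theta>) s a)\<^sup>2)
    = (\<Sum>s\<in>UNIV. \<Sum>a\<in>UNIV. ?w s a
        * (\<mu> s * npg_gain_bound \<eta> \<theta> s a))"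
    by (simp add: npg_gain_bound_def sum_distrib_left power_mult_distrib power2_eq_square mult_ac)
  also have "\<dots> \<le> (\<Sum>s\<in>UNIV. \<Sum>a\<in>UNIV. ?w s a * ?gain s a)"
    using npg_update_Vmu_gain[OF \<eta> mu_nonneg] w_nonneg
    by (intro sum_mono mult_left_mono) auto
  also have "\<dots> = (\<Sum>s\<in>UNIV. \<Sum>a\<in>UNIV. ?w s a * Vmu P r g (softmax (npg_update P r g \<eta> \<theta> s a)) \<mu>)
      - Vmu P r g (softmax \<theta>) \<mu>"
    using w_sum by (simp add: right_diff_distrib sum_subtractf sum_distrib_right[symmetric])
  finally show ?thesis .
qed

lemma expected_npg_gain_ge_optimal_adv:
  fixes \<theta> :: "'s \<Rightarrow> 'a \<Rightarrow> real" and astar :: "'s \<Rightarrow> 'a"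
  assumes \<eta>: "0 < \<eta>" and mu_nonneg: "\<And>s. 0 \<le> \<mu> s" and mu_sum: "(\<Sum>s\<in>UNIV. \<mu> s) = 1"
  shows "\<eta> * (1 - g) / (1 + \<eta>)
      * ((1 - g) * Min (range \<mu>) * (Min (range (\<lambda>s. softmax \<theta> s (astar s))))\<^sup>2)
      * (\<Sum>s\<in>UNIV. \<mu> s * (adv (softmax \<theta>) s (astar s))\<^sup>2)
    \<le> (\<Sum>s\<in>UNIV. \<Sum>a\<in>UNIV. dmu P g (softmax \<theta>) \<mu> s * softmax \<theta> s a
          * Vmu P r g (softmax (npg_update P r g \<eta> \<theta> s a)) \<mu>)
      - Vmu P r g (softmax \<theta>) \<mu>"
proof -
  define d where "d = dmu P g (softmax \<theta>) \<mu>"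
  define A where "A = (\<lambda>s a. adv (softmax \<theta>) s a)"
  define m\<pi> where "m\<pi> = Min (range (\<lambda>s. softmax \<theta> s (astar s)))"
  define K where "K = (1 - g) * Min (range \<mu>) * m\<pi>\<^sup>2"
  have "m\<pi> \<in> range (\<lambda>s. softmax \<theta> s (astar s))"
    unfolding m\<pi>_def by (rule Min_in) auto
  then have "0 \<le> m\<pi>" by (auto intro: less_imp_le softmax_pos)
  have term_le: "K * (\<mu> s * (A s (astar s))\<^sup>2) \<le> d s * \<mu> s * (softmax \<theta> s (astar s) * A s (astar s))\<^sup>2" for s
  proof -
    have "(1 - g) * Min (range \<mu>) \<le> (1 - g) * \<mu> s"
      using g_less_1 by (intro mult_left_mono Min_le) auto
    also have "\<dots> \<le> d s"
      unfolding d_def by (rule dmu_ge[OF mu_nonneg mu_sum is_policy_softmax])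
    finally have "(1 - g) * Min (range \<mu>) \<le> d s" .
    moreover have "m\<pi>\<^sup>2 \<le> (softmax \<theta> s (astar s))\<^sup>2"
      using \<open>0 \<le> m\<pi>\<close> unfolding m\<pi>_def by (intro power_mono Min_le) auto
    ultimately have "K \<le> d s * (softmax \<theta> s (astar s))\<^sup>2"
      unfolding K_def using \<open>0 \<le> m\<pi>\<close> g_less_1
      by (intro mult_mono) (auto simp: d_def dmu_nonneg[OF mu_nonneg mu_sum is_policy_softmax])
    then have "K * (\<mu> s * (A s (astar s))\<^sup>2) \<le> d s * (softmax \<theta> s (astar s))\<^sup>2 * (\<mu> s * (A s (astar s))\<^sup>2)"
      by (rule mult_right_mono) (simp add: mu_nonneg)
    then show ?thesis by (simp add: power_mult_distrib mult_ac)
  qed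
  have "K * (\<Sum>s\<in>UNIV. \<mu> s * (A s (astar s))\<^sup>2)
      \<le> (\<Sum>s\<in>UNIV. d s * \<mu> s * (softmax \<theta> s (astar s) * A s (astar s))\<^sup>2)"
    unfolding sum_distrib_left by (intro sum_mono term_le)
  also have "\<dots> \<le> (\<Sum>s\<in>UNIV. \<Sum>a\<in>UNIV. d s * \<mu> s * (softmax \<theta> s a * A s a)\<^sup>2)"
    using mu_nonneg unfolding d_def
    by (intro sum_mono member_le_sum)
       (auto intro!: mult_nonneg_nonneg dmu_nonneg[OF mu_nonneg mu_sum is_policy_softmax])
  finally have "K * (\<Sum>s\<in>UNIV. \<mu> s * (A s (astar s))\<^sup>2)
      \<le> (\<Sum>s\<in>UNIV. \<Sum>a\<in>UNIV. d s * \<mu> s * (softmax \<theta> s a * A s a)\<^sup>2)" .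
  then have "\<eta> * (1 - g) / (1 + \<eta>) * (K * (\<Sum>s\<in>UNIV. \<mu> s * (A s (astar s))\<^sup>2))
      \<le> \<eta> * (1 - g) / (1 + \<eta>) * (\<Sum>s\<in>UNIV. \<Sum>a\<in>UNIV. d s * \<mu> s * (softmax \<theta> s a * A s a)\<^sup>2)"
    using \<eta> g_less_1 by (intro mult_left_mono) simp_all
  also have "\<dots> \<le> (\<Sum>s\<in>UNIV. \<Sum>a\<in>UNIV. d s * softmax \<theta> s a
          * Vmu P r g (softmax (npg_update P r g \<eta> \<theta> s a)) \<mu>) - Vmu P r g (softmax \<theta>) \<mu>"
    unfolding d_def A_def by (rule expected_npg_gain_ge[OF \<eta> mu_nonneg mu_sum])
  finally show ?thesis unfolding K_def m\<pi>_def A_def d_def by (simp only: mult.assoc)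
qed

lemma npg_bound_le_optimal_adv:
  fixes \<theta> :: "'s \<Rightarrow> 'a \<Rightarrow> real" and astar :: "'s \<Rightarrow> 'a"
  assumes \<eta>: "0 < \<eta>" and mu_nonneg: "\<And>s. 0 \<le> \<mu> s" and mu_sum: "(\<Sum>s\<in>UNIV. \<mu> s) = 1"
    and mu_min: "Min (range \<mu>) > 0"
  shows "\<eta> * (1 - g) ^ 4 * Min (range \<mu>) / (1 + \<eta>)
        * (1 / Max (range (\<lambda>s. dmu P g (det_policy astar) \<mu> s / \<mu> s)))
        * (Min (range (\<lambda>s. softmax \<theta> s (astar s))))\<^sup>2 / real CARD('s)
        * (Vmu P r g (det_policy astar) \<mu> - Vmu P r g (softmax \<theta>) \<mu>)\<^sup>2
    \<le> \<eta> * (1 - g) / (1 + \<eta>)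
      * ((1 - g) * Min (range \<mu>) * (Min (range (\<lambda>s. softmax \<theta> s (astar s))))\<^sup>2)
      * (\<Sum>s\<in>UNIV. \<mu> s * (adv (softmax \<theta>) s (astar s))\<^sup>2)"
proof -
  define M where "M = Max (range (\<lambda>s. dmu P g (det_policy astar) \<mu> s / \<mu> s))"
  define G where "G = Vmu P r g (det_policy astar) \<mu> - Vmu P r g (softmax \<theta>) \<mu>"
  define C where "C = \<eta> * (1 - g) / (1 + \<eta>)
      * ((1 - g) * Min (range \<mu>) * (Min (range (\<lambda>s. softmax \<theta> s (astar s))))\<^sup>2)"
  have mu_pos: "0 < \<mu> s" for s
    using mu_min Min_le[of "range \<mu>" "\<mu> s"] by auto
  have ratio: "dmu P g (det_policy astar) \<mu> s \<le> M * \<mu> s" for s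
    unfolding M_def by (rule le_Max_ratio_mult[OF mu_pos])
  have "0 < M"
  proof -
    fix s
    have "0 < (1 - g) * \<mu> s" using g_less_1 mu_pos[of s] by simp
    also have "\<dots> \<le> M * \<mu> s"
      using dmu_ge[OF mu_nonneg mu_sum is_policy_det_policy] ratio order_trans by blast
    finally show "0 < M" using mu_pos[of s] by (simp add: zero_less_mult_iff)
  qed
  have "((1 - g) * G)\<^sup>2 \<le> M * (\<Sum>s\<in>UNIV. \<mu> s * (adv (softmax \<theta>) s (astar s))\<^sup>2)"
    using value_gap_sq_le[OF mu_nonneg mu_sum is_policy_det_policy ratio, of "softmax \<theta>"]
    unfolding G_def by (simp add: sum_det_policy)
  then have gap: "((1 - g) * G)\<^sup>2 / M \<le> (\<Sum>s\<in>UNIV. \<mu> s * (adv (softmax \<theta>) s (astar s))\<^sup>2)"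
    using \<open>0 < M\<close> by (simp add: pos_divide_le_eq mult.commute)
  have "0 \<le> C"
    unfolding C_def using \<eta> g_less_1 less_imp_le[OF mu_min]
    by (intro mult_nonneg_nonneg divide_nonneg_pos) auto
  define X where "X = C * (((1 - g) * G)\<^sup>2 / M)"
  have "0 \<le> X"
    unfolding X_def using \<open>0 \<le> C\<close> \<open>0 < M\<close> by simp
  then have "X \<le> X * real CARD('s)"
    using mult_left_mono[of 1 "real CARD('s)" X] by simp
  have "\<eta> * (1 - g) ^ 4 * Min (range \<mu>) / (1 + \<eta>) * (1 / M)
        * (Min (range (\<lambda>s. softmax \<theta> s (astar s))))\<^sup>2 / real CARD('s) * G\<^sup>2
      = X / real CARD('s)"
    unfolding X_def C_def by (simp add: power_mult_distrib power4_eq_xxxx power2_eq_square)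
  also have "\<dots> \<le> X"
    using \<open>X \<le> X * real CARD('s)\<close> by (intro mult_imp_div_pos_le) simp_all
  also have "\<dots> \<le> C * (\<Sum>s\<in>UNIV. \<mu> s * (adv (softmax \<theta>) s (astar s))\<^sup>2)"
    unfolding X_def using gap \<open>0 \<le> C\<close> by (rule mult_left_mono)
  finally show ?thesis unfolding M_def G_def C_def .
qed

end

theorem lemma3:
  fixes P :: "'s::finite \<Rightarrow> 'a::finite \<Rightarrow> 's \<Rightarrow> real"
    and r :: "'s \<Rightarrow> 'a \<Rightarrow> real"
    and g :: real and \<eta> :: real
    and \<mu> :: "'s \<Rightarrow> real"
    and astar :: "'s \<Rightarrow> 'a"
    and \<theta> :: "nat \<Rightarrow> 's \<Rightarrow> 'a \<Rightarrow> real"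
    and st :: "nat \<Rightarrow> 's" and act :: "nat \<Rightarrow> 'a"
  assumes r_range: "\<And>s a. 0 \<le> r s a \<and> r s a \<le> 1"
    and P_nonneg: "\<And>s a s'. 0 \<le> P s a s'"
    and P_sum: "\<And>s a. (\<Sum>s'\<in>UNIV. P s a s') = 1"
    and g_range: "0 \<le> g" "g < 1"
    and mu_nonneg: "\<And>s. 0 \<le> \<mu> s"
    and mu_sum: "(\<Sum>s\<in>UNIV. \<mu> s) = 1"
    and mu_min: "Min (range \<mu>) > 0"
    and eta_pos: "\<eta> > 0"
    and optimal: "\<And>pol s. is_policy pol \<Longrightarrow> V P r g pol s \<le> V P r g (det_policy astar) s"
    and step: "\<And>t. t \<ge> 1 \<Longrightarrow> \<theta> (Suc t) = npg_update P r g \<eta> (\<theta> t) (st t) (act t)"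
    and sample_support: "\<And>t. t \<ge> 1 \<Longrightarrow>
          dmu P g (softmax (\<theta> t)) \<mu> (st t) > 0 \<and> softmax (\<theta> t) (st t) (act t) > 0"
  shows "\<forall>t\<ge>1.
     (\<forall>s0. V P r g (softmax (\<theta> (Suc t))) s0 - V P r g (softmax (\<theta> t)) s0 \<ge> 0) \<and>
     (\<Sum>s\<in>UNIV. \<Sum>a\<in>UNIV. dmu P g (softmax (\<theta> t)) \<mu> s * softmax (\<theta> t) s a *
          Vmu P r g (softmax (npg_update P r g \<eta> (\<theta> t) s a)) \<mu>)
       - Vmu P r g (softmax (\<theta> t)) \<mu>
     \<ge> \<eta> * (1 - g) ^ 4 * Min (range \<mu>) / (1 + \<eta>)
        * (1 / Max (range (\<lambda>s. dmu P g (det_policy astar) \<mu> s / \<mu> s)))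
        * (Min (range (\<lambda>s. softmax (\<theta> t) s (astar s))))\<^sup>2 / real CARD('s)
        * (Vmu P r g (det_policy astar) \<mu> - Vmu P r g (softmax (\<theta> t)) \<mu>)\<^sup>2"
proof -
  interpret mdp P r g
    using r_range P_nonneg P_sum g_range by unfold_locales auto
  have "0 \<le> V P r g (softmax (\<theta> (Suc t))) s0 - V P r g (softmax (\<theta> t)) s0"
    if "1 \<le> t" for t s0
    unfolding step[OF that] by (rule npg_update_V_mono[OF eta_pos])
  then show ?thesis
    using npg_bound_le_optimal_adv[OF eta_pos mu_nonneg mu_sum mu_min]
      expected_npg_gain_ge_optimal_adv[OF eta_pos mu_nonneg mu_sum]
    by (blast intro: order_trans)
qed

end
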